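(* Assume (D1): there are $K:E\to(0,\infty)$ bounded on compact sets and $h:[0,\infty)\to[0,\infty)$ with $\int_0^\infty h(t)dt<\infty$ such that $\|P_t(x,\cdot)-\mu(\cdot)\|_{TV}<K(x)h(t)$ for all $x,t$; and (D2): $\mathbb E^x\{K(X_T)\}<\infty$ for all $x,T$. Suppose $\mu(f)<0$ and there is $\delta>0$ such that $L_\delta=\{x\in E: f(x)\le\mu(f)+\delta\}$ is compact. Let $q(x)=\limsup_{T\to\infty}\mathbb E^x\{\int_0^T(f(X_s)-\mu(f))ds\}$, $B_n=\{x\in E:\|x\|\le n\}$ and $\tau_{B_n}=\inf\{t\ge0:X_t\in B_n\}$. Then $\lim_{\|x\|\to\infty}q(x)=\infty$ if and only if $\lim_{\|x\|\to\infty}\mathbb E^x\{\tau_{B_n}\}=\infty$ for all $n$.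
   Context: $E$ is a locally compact separable metric space in which every closed ball is compact; $\|x\|$ denotes the distance of $x$ from a fixed reference point of $E$ (the paper writes it as a norm). $(X_t)$ is a right-continuous time-homogeneous (standard) Markov process on $E$ with laws $\mathbb P^x$, expectations $\mathbb E^x$, transition probabilities $P_t(x,\cdot)$, satisfying the weak Feller property $P_t\mathcal C_0\subseteq\mathcal C_0$ ($\mathcal C_0$ continuous bounded functions vanishing at infinity) and ergodicity (a unique probability measure $\mu$ with $\|P_t(x,\cdot)-\mu\|_{TV}\to0$ for all $x$); $\mu(f)=\int f\,d\mu$. $f$ is continuous and bounded. *)

theory Defs
  imports "HOL-Probability.Probability"
begin

definition tv_dist :: "'a::topological_space measure \<Rightarrow> 'a measure \<Rightarrow> real" where
  "tv_dist P Q = (SUP A\<in>sets (borel :: 'a measure). \<bar>measure P A - measure Q A\<bar>)"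

definition trans_prob :: "('a::topological_space \<Rightarrow> 'w measure) \<Rightarrow> (real \<Rightarrow> 'w \<Rightarrow> 'a) \<Rightarrow> real \<Rightarrow> 'a \<Rightarrow> 'a measure" where
  "trans_prob M X t x = distr (M x) borel (X t)"

definition at_infty_from :: "'a::metric_space \<Rightarrow> 'a filter" where
  "at_infty_from x0 = filtercomap (\<lambda>x. dist x0 x) at_top"

definition C0 :: "'a::metric_space \<Rightarrow> ('a \<Rightarrow> real) set" where
  "C0 x0 = {g. continuous_on UNIV g \<and> bounded (range g) \<and> (g \<longlongrightarrow> 0) (at_infty_from x0)}"

text \<open>Hitting time inf{t >= 0 : X_t in B}, valued in [0,\<infinity>] (inf of the empty set = \<infinity>).\<close>
definition hitting_time :: "(real \<Rightarrow> 'w \<Rightarrow> 'a) \<Rightarrow> 'a set \<Rightarrow> 'w \<Rightarrow> ennreal" where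
  "hitting_time X B \<omega> = (INF t\<in>{t. 0 \<le> t \<and> X t \<omega> \<in> B}. ennreal t)"

definition is_stopping_time :: "(real \<Rightarrow> 'w measure) \<Rightarrow> ('w \<Rightarrow> ennreal) \<Rightarrow> bool" where
  "is_stopping_time F \<tau> \<longleftrightarrow>
     (\<forall>t\<ge>0. {\<omega>\<in>space (F t). \<tau> \<omega> \<le> ennreal t} \<in> sets (F t))"

definition stopped_sets :: "'w measure \<Rightarrow> (real \<Rightarrow> 'w measure) \<Rightarrow> ('w \<Rightarrow> ennreal) \<Rightarrow> 'w set set" where
  "stopped_sets M0 F \<tau> =
     {A \<in> sets M0. \<forall>t\<ge>0. A \<inter> {\<omega>\<in>space M0. \<tau> \<omega> \<le> ennreal t} \<in> sets (F t)}"

text \<open>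
  A right-continuous time-homogeneous standard Markov process on E (realised on a measurable
  space of sample points 'w, with laws M x = P^x and filtration F):
  each P^x is a probability measure on a common measurable space; X_t is F_t-adapted;
  F is a right-continuous filtration; P^x(X_0 = x) = 1; all paths are right-continuous with
  left limits; x \<mapsto> P^x(X_t \<in> A) is Borel measurable; hitting times of Borel sets are
  F-stopping times; the strong Markov property holds at F-stopping times; and the process is
  quasi-left-continuous.\<close>
definition standard_markov ::
  "('a::{metric_space, second_countable_topology} \<Rightarrow> 'w measure) \<Rightarrow> (real \<Rightarrow> 'w measure) \<Rightarrow> (real \<Rightarrow> 'w \<Rightarrow> 'a) \<Rightarrow> bool" where
  "standard_markov M F X \<longleftrightarrow>
     (\<forall>x. prob_space (M x)) \<and>
     (\<forall>x y. sets (M x) = sets (M y)) \<and>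
     (\<forall>x t. 0 \<le> t \<longrightarrow> subalgebra (M x) (F t)) \<and>
     (\<forall>s t. 0 \<le> s \<longrightarrow> s \<le> t \<longrightarrow> sets (F s) \<subseteq> sets (F t)) \<and>
     (\<forall>t. 0 \<le> t \<longrightarrow> sets (F t) = (\<Inter>s\<in>{t<..}. sets (F s))) \<and>
     (\<forall>t. 0 \<le> t \<longrightarrow> X t \<in> measurable (F t) borel) \<and>
     (\<forall>x. AE \<omega> in M x. X 0 \<omega> = x) \<and>
     (\<forall>x. \<forall>\<omega>\<in>space (M x). \<forall>t\<ge>0. continuous (at_right t) (\<lambda>s. X s \<omega>)) \<and>
     (\<forall>x. \<forall>\<omega>\<in>space (M x). \<forall>t>0. \<exists>l. ((\<lambda>s. X s \<omega>) \<longlongrightarrow> l) (at_left t)) \<and>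
     (\<forall>t A. 0 \<le> t \<longrightarrow> A \<in> sets borel \<longrightarrow>
        (\<lambda>x. measure (M x) {\<omega>\<in>space (M x). X t \<omega> \<in> A}) \<in> borel_measurable borel) \<and>
     (\<forall>B. B \<in> sets borel \<longrightarrow> is_stopping_time F (hitting_time X B)) \<and>
     (\<forall>\<tau> x s A (g :: 'a \<Rightarrow> real). is_stopping_time F \<tau> \<longrightarrow> 0 \<le> s \<longrightarrow>
        A \<in> stopped_sets (M x) F \<tau> \<longrightarrow> g \<in> borel_measurable borel \<longrightarrow> bounded (range g) \<longrightarrow>
        (\<integral>\<omega>. indicator (A \<inter> {\<omega>. \<tau> \<omega> < \<infinity>}) \<omega> * g (X (enn2real (\<tau> \<omega>) + s) \<omega>) \<partial>M x) =
        (\<integral>\<omega>. indicator (A \<inter> {\<omega>. \<tau> \<omega> < \<infinity>}) \<omega> *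
               (\<integral>\<omega>'. g (X s \<omega>') \<partial>M (X (enn2real (\<tau> \<omega>)) \<omega>)) \<partial>M x)) \<and>
     (\<forall>\<sigma> \<tau> x. (\<forall>n. is_stopping_time F (\<sigma> n)) \<longrightarrow> is_stopping_time F \<tau> \<longrightarrow>
        (\<forall>\<omega>\<in>space (M x). incseq (\<lambda>n. \<sigma> n \<omega>) \<and> (\<lambda>n. \<sigma> n \<omega>) \<longlonglongrightarrow> \<tau> \<omega>) \<longrightarrow>
        (AE \<omega> in M x. \<tau> \<omega> < \<infinity> \<longrightarrow>
           (\<lambda>n. X (enn2real (\<sigma> n \<omega>)) \<omega>) \<longlonglongrightarrow> X (enn2real (\<tau> \<omega>)) \<omega>))"

definition weak_feller :: "'a::metric_space \<Rightarrow> ('a \<Rightarrow> 'w measure) \<Rightarrow> (real \<Rightarrow> 'w \<Rightarrow> 'a) \<Rightarrow> bool" where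
  "weak_feller x0 M X \<longleftrightarrow>
     (\<forall>t g. 0 \<le> t \<longrightarrow> g \<in> C0 x0 \<longrightarrow> (\<lambda>x. \<integral>\<omega>. g (X t \<omega>) \<partial>M x) \<in> C0 x0)"

definition ergodic_with :: "('a::topological_space \<Rightarrow> 'w measure) \<Rightarrow> (real \<Rightarrow> 'w \<Rightarrow> 'a) \<Rightarrow> 'a measure \<Rightarrow> bool" where
  "ergodic_with M X \<mu> \<longleftrightarrow>
     prob_space \<mu> \<and> sets \<mu> = sets borel \<and>
     (\<forall>x. ((\<lambda>t. tv_dist (trans_prob M X t x) \<mu>) \<longlongrightarrow> 0) at_top) \<and>
     (\<forall>\<nu>. prob_space \<nu> \<and> sets \<nu> = sets borel \<and>
          (\<forall>x. ((\<lambda>t. tv_dist (trans_prob M X t x) \<nu>) \<longlongrightarrow> 0) at_top) \<longrightarrow> \<nu> = \<mu>)"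

end

theory Submission
  imports Defs
begin

text \<open>Fix a closed ball \<open>B\<^sub>n\<close> with hitting time \<open>\<tau>\<close> and split the expected occupation integral
  \<open>V\<^sub>x(T) = E\<^sup>x \<integral>\<^sub>0\<^sup>T (f(X\<^sub>s) - \<mu>(f)) ds\<close> at \<open>\<tau> \<and> T\<close>. By the strong Markov property at \<open>\<tau>\<close>, the part
  after \<open>\<tau>\<close> is \<open>\<integral>\<^sub>0\<^sup>T E\<^sup>x[\<tau> \<le> T - u; P\<^sub>u f(X\<^sub>\<tau>) - \<mu>(f)] du\<close>; as \<open>X\<^sub>\<tau> \<in> B\<^sub>n\<close>, where \<open>K\<close> is bounded,
  (D1) bounds it by a constant independent of \<open>x\<close> and \<open>T\<close>. The part before \<open>\<tau>\<close> is at most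
  \<open>2 \<parallel>f\<parallel>\<^sub>\<infinity> E\<^sup>x \<tau>\<close>, and at least \<open>\<delta> E\<^sup>x(\<tau> \<and> T)\<close> once \<open>B\<^sub>n\<close> contains the compact sublevel set
  \<open>L\<^sub>\<delta>\<close>. Letting \<open>T \<rightarrow> \<infinity>\<close> and then \<open>\<parallel>x\<parallel> \<rightarrow> \<infinity>\<close> gives both implications.\<close>

lemma abs_measure_diff_le_tv_dist:
  fixes P Q :: "'a::topological_space measure"
  assumes "prob_space P" "prob_space Q" "A \<in> sets borel"
  shows "\<bar>measure P A - measure Q A\<bar> \<le> tv_dist P Q"
  unfolding tv_dist_def
proof (rule cSUP_upper[OF assms(3)])
  show "bdd_above ((\<lambda>A. \<bar>measure P A - measure Q A\<bar>) ` sets borel)"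
  proof (rule bdd_aboveI[of _ 1], clarify)
    fix B
    have "measure P B \<le> 1" "measure Q B \<le> 1"
      using prob_space.prob_le_1[OF assms(1)] prob_space.prob_le_1[OF assms(2)] by auto
    then show "\<bar>measure P B - measure Q B\<bar> \<le> 1"
      using measure_nonneg[of P B] measure_nonneg[of Q B] by linarith
  qed
qed

lemma
  fixes P :: "'a::topological_space measure" and g :: "'a \<Rightarrow> real"
  assumes P: "prob_space P" "sets P = sets borel" and g[measurable]: "g \<in> borel_measurable borel"
    and g_bounds: "\<And>y. 0 \<le> g y" "\<And>y. g y \<le> c"
  shows layer_cake_integral:
      "(\<integral>y. g y \<partial>P) = (\<integral>t. (if 0 \<le> t then measure P {y. t < g y} else 0) \<partial>lborel)"
    and layer_cake_integrable:
      "integrable lborel (\<lambda>t. if 0 \<le> t then measure P {y. t < g y} else 0)"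
proof -
  interpret P: prob_space P by fact
  have [measurable_cong]: "sets P = sets borel" by fact
  have space_P: "space P = UNIV" using sets_eq_imp_space_eq[OF P(2)] by simp
  interpret pair_sigma_finite P lborel
    by (simp add: pair_sigma_finite_def P.sigma_finite_measure_axioms lborel.sigma_finite_measure_axioms)
  define G where "G = (\<lambda>(y,t). if 0 \<le> t \<and> t < g y then 1 else (0::real))"
  have [measurable]: "G \<in> borel_measurable (P \<Otimes>\<^sub>M lborel)"
    unfolding G_def by measurable
  have "0 \<le> c" using g_bounds[of undefined] by linarith
  have "integrable (P \<Otimes>\<^sub>M lborel) G"
  proof (rule Bochner_Integration.integrable_bound)
    show "integrable (P \<Otimes>\<^sub>M lborel) (indicator (space P \<times> {0..c}) :: _ \<Rightarrow> real)"
    proof (rule integrable_real_indicator)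
      have "emeasure (P \<Otimes>\<^sub>M lborel) (space P \<times> {0..c}) = emeasure P (space P) * emeasure lborel {0..c}"
        by (rule lborel.emeasure_pair_measure_Times) auto
      then show "emeasure (P \<Otimes>\<^sub>M lborel) (space P \<times> {0..c}) < \<infinity>"
        using \<open>0 \<le> c\<close> by (simp add: P.emeasure_space_1)
    qed auto
    show "AE p in P \<Otimes>\<^sub>M lborel. norm (G p) \<le> norm (indicator (space P \<times> {0..c}) p :: real)"
      using g_bounds
      by (intro AE_I2) (auto simp: G_def space_P indicator_def space_pair_measure split: if_splits,
          meson g_bounds(2) less_imp_le order.trans)
  qed measurable
  then have G_int: "integrable (P \<Otimes>\<^sub>M lborel) (\<lambda>(y, t). G (y, t))"
    by simp
  have inner_t: "(\<integral>t. G (y,t) \<partial>lborel) = g y" for y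
  proof -
    have "(\<integral>t. G (y,t) \<partial>lborel) = (\<integral>t. indicator {0..<g y} t \<partial>lborel)"
      by (rule Bochner_Integration.integral_cong) (auto simp: G_def indicator_def)
    also have "\<dots> = g y" using g_bounds[of y] by simp
    finally show ?thesis .
  qed
  have inner_y: "(\<integral>y. G (y,t) \<partial>P) = (if 0 \<le> t then measure P {y. t < g y} else 0)" for t
  proof -
    have "(\<integral>y. G (y,t) \<partial>P) = (\<integral>y. (if 0 \<le> t then indicator {y. t < g y} y else 0) \<partial>P)"
      by (rule Bochner_Integration.integral_cong) (auto simp: G_def indicator_def)
    also have "\<dots> = (if 0 \<le> t then measure P {y. t < g y} else 0)" by (simp add: space_P)
    finally show ?thesis .
  qed
  show "(\<integral>y. g y \<partial>P) = (\<integral>t. (if 0 \<le> t then measure P {y. t < g y} else 0) \<partial>lborel)"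
    using Fubini_integral[OF G_int] by (simp add: inner_t inner_y)
  show "integrable lborel (\<lambda>t. if 0 \<le> t then measure P {y. t < g y} else 0)"
    using integrable_snd[OF G_int] by (simp add: inner_y)
qed

text \<open>Shifting \<open>f\<close> by \<open>c\<close> makes it nonnegative, and by the layer cake formula the difference of
  the integrals becomes an integral over \<open>[0, 2c]\<close> of differences of measures of level sets.\<close>
lemma abs_integral_diff_le_tv_dist:
  fixes P Q :: "'a::topological_space measure" and f :: "'a \<Rightarrow> real"
  assumes P: "prob_space P" "sets P = sets borel" and Q: "prob_space Q" "sets Q = sets borel"
    and f[measurable]: "f \<in> borel_measurable borel" and f_bound: "\<And>y. \<bar>f y\<bar> \<le> c"
  shows "\<bar>(\<integral>y. f y \<partial>P) - (\<integral>y. f y \<partial>Q)\<bar> \<le> 2 * c * tv_dist P Q"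
proof -
  interpret P: prob_space P by fact
  interpret Q: prob_space Q by fact
  have [measurable_cong]: "sets P = sets borel" "sets Q = sets borel" using P Q by auto
  define g where "g y = f y + c" for y
  have g_meas[measurable]: "g \<in> borel_measurable borel" unfolding g_def by measurable
  have g_nonneg: "0 \<le> g y" and g_le: "g y \<le> 2*c" for y
    using f_bound[of y] by (auto simp: g_def abs_le_iff)
  have "0 \<le> c" using f_bound[of undefined] by linarith
  have "integrable P f" "integrable Q f"
    using f_bound by (auto intro!: P.integrable_const_bound[where B=c] Q.integrable_const_bound[where B=c])
  then have "(\<integral>y. f y \<partial>P) - (\<integral>y. f y \<partial>Q) = (\<integral>y. g y \<partial>P) - (\<integral>y. g y \<partial>Q)"
    unfolding g_def by (simp add: P.prob_space Q.prob_space)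
  define IP where "IP t = (if 0 \<le> t then measure P {y. t < g y} else 0)" for t
  define IQ where "IQ t = (if 0 \<le> t then measure Q {y. t < g y} else 0)" for t
  have IP: "integrable lborel IP" "(\<integral>y. g y \<partial>P) = (\<integral>t. IP t \<partial>lborel)"
    unfolding IP_def by (rule layer_cake_integrable layer_cake_integral, fact+)+
  have IQ: "integrable lborel IQ" "(\<integral>y. g y \<partial>Q) = (\<integral>t. IQ t \<partial>lborel)"
    unfolding IQ_def by (rule layer_cake_integrable layer_cake_integral, fact+)+
  have "(\<integral>y. g y \<partial>P) - (\<integral>y. g y \<partial>Q) = (\<integral>t. IP t - IQ t \<partial>lborel)"
    using IP IQ by simp
  also have "\<bar>\<dots>\<bar> \<le> (\<integral>t. indicator {0..2*c} t * tv_dist P Q \<partial>lborel)"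
  proof (rule integral_abs_bound_integral)
    show "integrable lborel (\<lambda>t. IP t - IQ t)" using IP IQ by auto
    show "integrable lborel (\<lambda>t. indicator {0..2*c} t * tv_dist P Q)"
      by (intro integrable_mult_left integrable_real_indicator) (auto simp: emeasure_lborel_Icc_eq)
    fix t
    show "\<bar>IP t - IQ t\<bar> \<le> indicator {0..2 * c} t * tv_dist P Q"
    proof (cases "0 \<le> t \<and> t \<le> 2*c")
      case True
      have "{y. t < g y} \<in> sets borel" by measurable
      then show ?thesis
        using True abs_measure_diff_le_tv_dist[OF P(1) Q(1)] by (auto simp: IP_def IQ_def)
    next
      case False
      have "{y. t < g y} = {}" if "2*c < t" using g_le that by (smt (verit) Collect_empty_eq)
      with False show ?thesis by (auto simp: IP_def IQ_def)
    qed
  qed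
  also have "\<dots> = 2*c * tv_dist P Q" using \<open>0 \<le> c\<close> by simp
  finally show ?thesis
    using \<open>(\<integral>y. f y \<partial>P) - (\<integral>y. f y \<partial>Q) = _\<close> by simp
qed

lemma set_integrable_bounded:
  fixes \<psi> :: "real \<Rightarrow> real"
  assumes [measurable]: "\<psi> \<in> borel_measurable borel" and bound: "\<And>s. \<bar>\<psi> s\<bar> \<le> C"
    and [measurable]: "A \<in> sets borel" and finite: "emeasure lborel A < \<infinity>"
  shows "set_integrable lborel A \<psi>"
  unfolding set_integrable_def
proof (rule Bochner_Integration.integrable_bound[of lborel "\<lambda>s. C * indicator A s"])
  show "integrable lborel (\<lambda>s. C * indicator A s)"
    using finite by (intro integrable_mult_right integrable_real_indicator) auto
  show "AE s in lborel. norm (indicator A s *\<^sub>R \<psi> s) \<le> norm (C * indicator A s)"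
  proof (intro AE_I2)
    fix s show "norm (indicator A s *\<^sub>R \<psi> s) \<le> norm (C * indicator A s)"
      using bound[of s] by (cases "s \<in> A") auto
  qed
qed simp

lemma set_integral_Icc_split_shift:
  fixes \<psi> :: "real \<Rightarrow> real"
  assumes [measurable]: "\<psi> \<in> borel_measurable borel" and bound: "\<And>s. \<bar>\<psi> s\<bar> \<le> C"
    and t: "0 \<le> t" "t \<le> T"
  shows "(\<integral>s\<in>{0..T}. \<psi> s \<partial>lborel) =
    (\<integral>s\<in>{0..<t}. \<psi> s \<partial>lborel) + (\<integral>u. indicator {0..T-t} u * \<psi> (t+u) \<partial>lborel)"
proof -
  have split: "{0..T} = {0..<t} \<union> {t..T}" using t by auto
  have "(\<integral>s\<in>{0..T}. \<psi> s \<partial>lborel) = (\<integral>s\<in>{0..<t}. \<psi> s \<partial>lborel) + (\<integral>s\<in>{t..T}. \<psi> s \<partial>lborel)"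
    unfolding split by (rule set_integral_Un)
      (auto intro!: set_integrable_bounded[OF _ bound] simp: emeasure_lborel_Icc_eq t)
  also have "(\<integral>s\<in>{t..T}. \<psi> s \<partial>lborel) = (\<integral>u. indicator {t..T} (t + 1 * u) * \<psi> (t + 1 * u) \<partial>lborel)"
    using lborel_integral_real_affine[of 1 "\<lambda>s. indicator {t..T} s * \<psi> s" t]
    by (simp add: set_lebesgue_integral_def)
  also have "\<dots> = (\<integral>u. indicator {0..T-t} u * \<psi> (t+u) \<partial>lborel)"
    by (rule Bochner_Integration.integral_cong) (auto simp: indicator_def)
  finally show ?thesis .
qed

text \<open>The remainder is indexed by \<open>u \<in> [0, T]\<close> rather than \<open>[0, T - t]\<close>, so that it stays jointly
  measurable when \<open>t\<close> is a random time.\<close>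
lemma set_integral_Icc_split_at_ennreal:
  fixes \<psi> :: "real \<Rightarrow> real" and t :: ennreal
  assumes \<psi>: "\<psi> \<in> borel_measurable borel" and bound: "\<And>s. \<bar>\<psi> s\<bar> \<le> C" and T: "0 \<le> T"
  shows "(\<integral>s\<in>{0..T}. \<psi> s \<partial>lborel) = (\<integral>s\<in>{0..<enn2real (min t (ennreal T))}. \<psi> s \<partial>lborel)
    + (\<integral>u. indicator {0..T} u * (if t \<le> ennreal (T - u) then \<psi> (enn2real t + u) else 0) \<partial>lborel)"
proof (cases "t \<le> ennreal T")
  case True
  then obtain r where t: "t = ennreal r" and r: "0 \<le> r" "r \<le> T"
    using T by (cases t) (auto simp: ennreal_le_iff top_unique)
  have "indicator {0..T} u * (if t \<le> ennreal (T - u) then \<psi> (enn2real t + u) else 0)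
      = indicator {0..T-r} u * \<psi> (r+u)" for u
    using r by (cases "u \<le> T") (auto simp: t indicator_def ennreal_le_iff)
  then show ?thesis
    using set_integral_Icc_split_shift[OF \<psi> bound r] True r(1) by (simp add: t min_absorb1)
next
  case False
  have "(\<lambda>u. indicator {0..T-T} u * \<psi> (T+u)) = (\<lambda>u. indicator {0} u * \<psi> T)"
    by (auto simp: indicator_def fun_eq_iff)
  then have "(\<integral>s\<in>{0..T}. \<psi> s \<partial>lborel) = (\<integral>s\<in>{0..<T}. \<psi> s \<partial>lborel)"
    using set_integral_Icc_split_shift[OF \<psi> bound T order_refl] by simp
  moreover have "\<not> t \<le> ennreal (T - u)" if "0 \<le> u" for u
    using False that order.trans[OF _ ennreal_leI[of "T - u" T]] by auto
  then have "(\<lambda>u. indicator {0..T} u * (if t \<le> ennreal (T - u) then \<psi> (enn2real t + u) else 0))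
      = (\<lambda>_. 0 :: real)"
    by (auto simp: indicator_def fun_eq_iff)
  ultimately show ?thesis
    using False T by (simp add: min_absorb2)
qed

lemma (in prob_space) abs_integral_le_const:
  fixes f :: "'a \<Rightarrow> real"
  assumes [measurable]: "f \<in> borel_measurable M" and bound: "\<And>x. x \<in> space M \<Longrightarrow> \<bar>f x\<bar> \<le> c"
  shows "\<bar>\<integral>x. f x \<partial>M\<bar> \<le> c"
proof -
  have "integrable M f"
    using bound by (intro integrable_const_bound[where B=c]) auto
  have "\<bar>\<integral>x. f x \<partial>M\<bar> \<le> (\<integral>x. \<bar>f x\<bar> \<partial>M)"
    using integral_norm_bound[of M f] by simp
  also have "\<dots> \<le> c"
    using \<open>integrable M f\<close> bound by (intro integral_le_const) auto
  finally show ?thesis .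
qed

lemma eventually_less_nn_integral_min:
  fixes f :: "'a \<Rightarrow> ennreal"
  assumes [measurable]: "f \<in> borel_measurable M" and "c < (\<integral>\<^sup>+\<omega>. f \<omega> \<partial>M)"
  shows "\<forall>\<^sub>F T in at_top. c < (\<integral>\<^sup>+\<omega>. min (f \<omega>) (ennreal T) \<partial>M)"
proof -
  have "(\<lambda>N. \<integral>\<^sup>+\<omega>. min (f \<omega>) (of_nat N) \<partial>M) \<longlonglongrightarrow> (\<integral>\<^sup>+\<omega>. f \<omega> \<partial>M)"
  proof (rule nn_integral_LIMSEQ)
    show "incseq (\<lambda>N \<omega>. min (f \<omega>) (of_nat N :: ennreal))"
      unfolding incseq_def le_fun_def by (intro allI impI min.mono order_refl) simp
    fix \<omega>
    have "(\<lambda>N. min (f \<omega>) (of_nat N :: ennreal)) \<longlonglongrightarrow> min (f \<omega>) top"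
      by (intro tendsto_min tendsto_const of_nat_tendsto_top_ennreal)
    then show "(\<lambda>N. min (f \<omega>) (of_nat N :: ennreal)) \<longlonglongrightarrow> f \<omega>" by simp
  qed measurable
  then have "\<forall>\<^sub>F N in sequentially. c < (\<integral>\<^sup>+\<omega>. min (f \<omega>) (of_nat N) \<partial>M)"
    using assms(2) by (rule order_tendstoD(1))
  then obtain N where N: "c < (\<integral>\<^sup>+\<omega>. min (f \<omega>) (of_nat N) \<partial>M)"
    unfolding eventually_sequentially by blast
  show ?thesis
    using eventually_ge_at_top[of "real N"]
  proof eventually_elim
    case (elim T)
    then have "(of_nat N :: ennreal) \<le> ennreal T"
      by (simp add: ennreal_of_nat_eq_real_of_nat ennreal_leI)
    then have "(\<integral>\<^sup>+\<omega>. min (f \<omega>) (of_nat N) \<partial>M) \<le> (\<integral>\<^sup>+\<omega>. min (f \<omega>) (ennreal T) \<partial>M)"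
      by (intro nn_integral_mono min.mono order_refl)
    with N show ?case by simp
  qed
qed

lemma tendsto_top_if_affine_upper_bound:
  fixes q :: "'a \<Rightarrow> ereal" and E :: "'a \<Rightarrow> ennreal"
  assumes "(q \<longlongrightarrow> \<infinity>) F"
    and upper: "\<And>x e. 0 \<le> e \<Longrightarrow> E x \<le> ennreal e \<Longrightarrow> q x \<le> ereal (a * e + b)"
  shows "(E \<longlongrightarrow> \<infinity>) F"
  unfolding infinity_ennreal_def tendsto_top_iff_ennreal
proof (intro allI impI)
  fix l :: real assume "0 \<le> l"
  have "\<forall>\<^sub>F x in F. ereal (a * l + b) < q x"
    using assms(1) unfolding tendsto_PInfty by blast
  then show "\<forall>\<^sub>F x in F. ennreal l < E x"
    by eventually_elim (use upper[OF \<open>0 \<le> l\<close>] in \<open>force simp: not_less[symmetric]\<close>)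
qed

lemma tendsto_PInfty_if_affine_lower_bound:
  fixes q :: "'a \<Rightarrow> ereal" and E :: "'a \<Rightarrow> ennreal"
  assumes "(E \<longlongrightarrow> \<infinity>) F" and "0 < a"
    and lower: "\<And>x z. 0 \<le> z \<Longrightarrow> ennreal z < E x \<Longrightarrow> ereal (a * z - b) \<le> q x"
  shows "(q \<longlongrightarrow> \<infinity>) F"
  unfolding tendsto_PInfty
proof
  fix r :: real
  define z where "z = max 0 (r + b + 1) / a"
  have "0 \<le> z" "r < a * z - b"
    using \<open>0 < a\<close> by (auto simp: z_def)
  have "\<forall>\<^sub>F x in F. ennreal z < E x"
    using assms(1) unfolding infinity_ennreal_def tendsto_top_iff_ennreal using \<open>0 \<le> z\<close> by blast
  then show "\<forall>\<^sub>F x in F. ereal r < q x"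
  proof eventually_elim
    case (elim x)
    have "ereal r < ereal (a * z - b)" using \<open>r < a * z - b\<close> by simp
    also have "\<dots> \<le> q x" by (rule lower[OF \<open>0 \<le> z\<close> elim])
    finally show ?case .
  qed
qed

locale markov_process =
  fixes M :: "'a::{metric_space, second_countable_topology} \<Rightarrow> 'w measure"
    and F :: "real \<Rightarrow> 'w measure"
    and X :: "real \<Rightarrow> 'w \<Rightarrow> 'a"
  assumes standard_markov: "standard_markov M F X"
begin

lemma
  shows prob_space_M: "prob_space (M x)"
    and subalgebra_F: "0 \<le> t \<Longrightarrow> subalgebra (M x) (F t)"
    and sets_F_mono: "0 \<le> s \<Longrightarrow> s \<le> t \<Longrightarrow> sets (F s) \<subseteq> sets (F t)"
    and X_measurable_F: "0 \<le> t \<Longrightarrow> X t \<in> measurable (F t) borel"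
    and continuous_at_right_path:
      "\<omega> \<in> space (M x) \<Longrightarrow> 0 \<le> t \<Longrightarrow> continuous (at_right t) (\<lambda>s. X s \<omega>)"
    and measure_X_in_measurable: "0 \<le> t \<Longrightarrow> A \<in> sets borel \<Longrightarrow>
      (\<lambda>x. measure (M x) {\<omega>\<in>space (M x). X t \<omega> \<in> A}) \<in> borel_measurable borel"
    and stopping_time_hitting_time: "B \<in> sets borel \<Longrightarrow> is_stopping_time F (hitting_time X B)"
proof -
  note D = standard_markov[unfolded standard_markov_def]
  have "\<forall>x. prob_space (M x)" using D by (elim conjE) assumption
  then show "prob_space (M x)" ..
  have "\<forall>x t. 0 \<le> t \<longrightarrow> subalgebra (M x) (F t)" using D by (elim conjE) assumption
  then show "0 \<le> t \<Longrightarrow> subalgebra (M x) (F t)" by blast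
  have "\<forall>s t. 0 \<le> s \<longrightarrow> s \<le> t \<longrightarrow> sets (F s) \<subseteq> sets (F t)" using D by (elim conjE) assumption
  then show "0 \<le> s \<Longrightarrow> s \<le> t \<Longrightarrow> sets (F s) \<subseteq> sets (F t)" by blast
  have "\<forall>t. 0 \<le> t \<longrightarrow> X t \<in> measurable (F t) borel" using D by (elim conjE) assumption
  then show "0 \<le> t \<Longrightarrow> X t \<in> measurable (F t) borel" by blast
  have "\<forall>x. \<forall>\<omega>\<in>space (M x). \<forall>t\<ge>0. continuous (at_right t) (\<lambda>s. X s \<omega>)"
    using D by (elim conjE) assumption
  then show "\<omega> \<in> space (M x) \<Longrightarrow> 0 \<le> t \<Longrightarrow> continuous (at_right t) (\<lambda>s. X s \<omega>)" by blast
  have "\<forall>t A. 0 \<le> t \<longrightarrow> A \<in> sets borel \<longrightarrow>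
      (\<lambda>x. measure (M x) {\<omega>\<in>space (M x). X t \<omega> \<in> A}) \<in> borel_measurable borel"
    using D by (elim conjE) assumption
  then show "0 \<le> t \<Longrightarrow> A \<in> sets borel \<Longrightarrow>
      (\<lambda>x. measure (M x) {\<omega>\<in>space (M x). X t \<omega> \<in> A}) \<in> borel_measurable borel" by blast
  have "\<forall>B. B \<in> sets borel \<longrightarrow> is_stopping_time F (hitting_time X B)" using D by (elim conjE) assumption
  then show "B \<in> sets borel \<Longrightarrow> is_stopping_time F (hitting_time X B)" by blast
qed

lemma strong_markov:
  fixes g :: "'a \<Rightarrow> real"
  assumes "is_stopping_time F \<tau>" "0 \<le> s" "A \<in> stopped_sets (M x) F \<tau>"
    "g \<in> borel_measurable borel" "bounded (range g)"
  shows "(\<integral>\<omega>. indicator (A \<inter> {\<omega>. \<tau> \<omega> < \<infinity>}) \<omega> * g (X (enn2real (\<tau> \<omega>) + s) \<omega>) \<partial>M x) =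
    (\<integral>\<omega>. indicator (A \<inter> {\<omega>. \<tau> \<omega> < \<infinity>}) \<omega> * (\<integral>\<omega>'. g (X s \<omega>') \<partial>M (X (enn2real (\<tau> \<omega>)) \<omega>)) \<partial>M x)"
proof -
  have "\<forall>\<tau> x s A (g :: 'a \<Rightarrow> real). is_stopping_time F \<tau> \<longrightarrow> 0 \<le> s \<longrightarrow>
      A \<in> stopped_sets (M x) F \<tau> \<longrightarrow> g \<in> borel_measurable borel \<longrightarrow> bounded (range g) \<longrightarrow>
      (\<integral>\<omega>. indicator (A \<inter> {\<omega>. \<tau> \<omega> < \<infinity>}) \<omega> * g (X (enn2real (\<tau> \<omega>) + s) \<omega>) \<partial>M x) =
      (\<integral>\<omega>. indicator (A \<inter> {\<omega>. \<tau> \<omega> < \<infinity>}) \<omega> *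
        (\<integral>\<omega>'. g (X s \<omega>') \<partial>M (X (enn2real (\<tau> \<omega>)) \<omega>)) \<partial>M x)"
    using standard_markov unfolding standard_markov_def by (elim conjE) assumption
  then show ?thesis using assms by blast
qed

lemma space_F: "0 \<le> t \<Longrightarrow> space (F t) = space (M x)"
  using subalgebra_F unfolding subalgebra_def by blast

lemma sets_F_subset: "0 \<le> t \<Longrightarrow> sets (F t) \<subseteq> sets (M x)"
  using subalgebra_F unfolding subalgebra_def by blast

lemma X_measurable: "0 \<le> t \<Longrightarrow> X t \<in> borel_measurable (M x)"
  using subalgebra_F X_measurable_F by (rule measurable_from_subalg)

text \<open>Right-continuity of paths: \<open>X\<close> is the pointwise limit of the jointly measurable processes
  obtained by evaluating it at the dyadic points just to the right of the time argument.\<close>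
lemma measurable_X_max_0:
  "(\<lambda>p. X (max 0 (snd p)) (fst p)) \<in> borel_measurable (M x \<Otimes>\<^sub>M (lborel :: real measure))"
proof -
  define d where "d k s = (real (nat \<lfloor>2^k * max 0 s\<rfloor>) + 1) / 2^k" for k :: nat and s :: real
  have dyadic_measurable:
    "(\<lambda>p. X (d k (snd p)) (fst p)) \<in> borel_measurable (M x \<Otimes>\<^sub>M (lborel :: real measure))" for k
  proof -
    have "(\<lambda>p. (\<lambda>i. X ((real i + 1) / 2^k) (fst p)) (nat \<lfloor>2^k * max 0 (snd p)\<rfloor>))
        \<in> borel_measurable (M x \<Otimes>\<^sub>M (lborel :: real measure))"
    proof (rule measurable_compose_countable[where f="\<lambda>i p. X ((real i + 1) / 2^k) (fst p)"])
      fix i :: nat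
      show "(\<lambda>p. X ((real i + 1) / 2^k) (fst p)) \<in> borel_measurable (M x \<Otimes>\<^sub>M (lborel :: real measure))"
        by (rule measurable_compose[OF measurable_fst X_measurable]) simp
    next
      show "(\<lambda>p. nat \<lfloor>2^k * max 0 (snd p)\<rfloor>) \<in> M x \<Otimes>\<^sub>M (lborel :: real measure) \<rightarrow>\<^sub>M count_space UNIV"
        by (rule measurable_compose[of _ _ "count_space UNIV" nat]
            measurable_compose[OF _ measurable_real_floor])+
          (auto intro: measurable_count_space)
    qed
    then show ?thesis by (simp add: d_def)
  qed
  show ?thesis
  proof (rule borel_measurable_LIMSEQ_metric[OF dyadic_measurable])
    fix p assume p: "p \<in> space (M x \<Otimes>\<^sub>M (lborel :: real measure))"
    then have \<omega>: "fst p \<in> space (M x)" by (auto simp: space_pair_measure)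
    define s where "s = max 0 (snd p)"
    have "0 \<le> s" by (simp add: s_def)
    have d_bounds: "s < d k s" "d k s \<le> s + 1 / 2^k" for k
    proof -
      have floor: "real_of_int \<lfloor>2^k * s\<rfloor> \<le> 2^k * s" "2^k * s < real_of_int \<lfloor>2^k * s\<rfloor> + 1"
        by linarith+
      have "real (nat \<lfloor>2^k * s\<rfloor>) = real_of_int \<lfloor>2^k * s\<rfloor>" using \<open>0 \<le> s\<close> by simp
      moreover have d: "d k s = (real (nat \<lfloor>2^k * s\<rfloor>) + 1) / 2^k" using \<open>0 \<le> s\<close> by (simp add: d_def)
      ultimately have "2^k * s < real (nat \<lfloor>2^k * s\<rfloor>) + 1" "real (nat \<lfloor>2^k * s\<rfloor>) + 1 \<le> 2^k * s + 1"
        using floor by simp_all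
      then show "s < d k s" "d k s \<le> s + 1 / 2^k" unfolding d by (simp_all add: field_simps)
    qed
    have "(\<lambda>k. d k s) \<longlonglongrightarrow> s"
    proof (rule tendsto_sandwich[of "\<lambda>k. s" _ _ "\<lambda>k. s + 1 / 2^k"])
      show "\<forall>\<^sub>F k in sequentially. s \<le> d k s" "\<forall>\<^sub>F k in sequentially. d k s \<le> s + 1 / 2 ^ k"
        using d_bounds by (auto intro!: always_eventually less_imp_le)
      have "(\<lambda>k. s + (1/2) ^ k) \<longlonglongrightarrow> s + 0"
        by (intro tendsto_add tendsto_const LIMSEQ_power_zero) auto
      then show "(\<lambda>k. s + 1 / 2 ^ k) \<longlonglongrightarrow> s" by (simp add: power_one_over)
    qed simp
    then have "filterlim (\<lambda>k. d k s) (at_right s) sequentially"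
      unfolding filterlim_at
      by (auto intro!: always_eventually simp: d_bounds(1) less_imp_neq[OF d_bounds(1), symmetric])
    moreover have "((\<lambda>t. X t (fst p)) \<longlongrightarrow> X s (fst p)) (at_right s)"
      using continuous_at_right_path[OF \<omega> \<open>0 \<le> s\<close>] by (simp add: continuous_within)
    ultimately have "(\<lambda>k. X (d k s) (fst p)) \<longlonglongrightarrow> X s (fst p)"
      by (rule filterlim_compose[rotated])
    moreover have "d k (snd p) = d k s" for k by (simp add: d_def s_def)
    ultimately show "(\<lambda>k. X (d k (snd p)) (fst p)) \<longlonglongrightarrow> X (max 0 (snd p)) (fst p)"
      by (simp add: s_def)
  qed
qed

lemma measurable_path:
  "\<omega> \<in> space (M x) \<Longrightarrow> (\<lambda>s. X (max 0 s) \<omega>) \<in> borel_measurable borel"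
  using measurable_Pair2[OF measurable_X_max_0] by simp

lemma measurable_X_random_time:
  assumes "\<sigma> \<in> borel_measurable (M x)" "\<And>\<omega>. 0 \<le> \<sigma> \<omega>"
  shows "(\<lambda>\<omega>. X (\<sigma> \<omega>) \<omega>) \<in> borel_measurable (M x)"
proof -
  define Y where "Y = (\<lambda>p. X (max 0 (snd p)) (fst p))"
  have [measurable]: "Y \<in> borel_measurable (M x \<Otimes>\<^sub>M (lborel :: real measure))"
    unfolding Y_def by (rule measurable_X_max_0)
  have "(\<lambda>\<omega>. Y (\<omega>, \<sigma> \<omega>)) \<in> borel_measurable (M x)"
    using assms(1) by measurable
  then have "(\<lambda>\<omega>. X (max 0 (\<sigma> \<omega>)) \<omega>) \<in> borel_measurable (M x)"
    by (simp add: Y_def)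
  then show ?thesis using assms(2) by (simp add: max_absorb2)
qed

lemma hitting_time_le:
  "0 \<le> s \<Longrightarrow> X s \<omega> \<in> B \<Longrightarrow> hitting_time X B \<omega> \<le> ennreal s"
  unfolding hitting_time_def by (intro INF_lower) auto

text \<open>Right-continuity makes the infimum in the hitting time of a closed set attained.\<close>
lemma X_hitting_time_mem:
  assumes \<omega>: "\<omega> \<in> space (M x)" and B: "closed B" and finite: "hitting_time X B \<omega> < \<infinity>"
  shows "X (enn2real (hitting_time X B \<omega>)) \<omega> \<in> B"
proof -
  define S where "S = {t. 0 \<le> t \<and> X t \<omega> \<in> B}"
  define r where "r = enn2real (hitting_time X B \<omega>)"
  have "0 \<le> r" by (simp add: r_def)
  have r: "hitting_time X B \<omega> = ennreal r" using finite by (simp add: r_def ennreal_enn2real_if)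
  have lower: "r \<le> t" if "t \<in> S" for t
  proof -
    have "ennreal r \<le> ennreal t" using hitting_time_le[of t \<omega> B] that r by (auto simp: S_def)
    then show ?thesis using that by (auto simp: S_def ennreal_le_iff)
  qed
  show ?thesis
  proof (cases "r \<in> S")
    case True then show ?thesis by (simp add: S_def r_def)
  next
    case False
    have "\<exists>t\<in>S. t < r + 1 / (real k + 1)" for k :: nat
    proof -
      have "(INF t\<in>S. ennreal t) < ennreal r + ennreal (1 / (real k + 1))"
        using r by (simp add: hitting_time_def S_def[symmetric] ennreal_zero_less_divide)
      then have "(INF t\<in>S. ennreal t) < ennreal (r + 1 / (real k + 1))"
        using \<open>0 \<le> r\<close> by (simp add: ennreal_plus[symmetric] del: ennreal_plus)
      then obtain t where t: "t \<in> S" "ennreal t < ennreal (r + 1 / (real k + 1))"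
        by (auto simp: INF_less_iff)
      then have "t < r + 1 / (real k + 1)"
        using \<open>0 \<le> r\<close> by (subst (asm) ennreal_less_iff) (auto simp: S_def)
      then show ?thesis using t by blast
    qed
    then obtain t where t: "\<And>k. t k \<in> S" "\<And>k. t k < r + 1 / (real k + 1)" by metis
    have r_less: "r < t k" for k using lower[OF t(1)[of k]] False t(1)[of k] by (cases "r = t k") auto
    have "t \<longlonglongrightarrow> r"
    proof (rule tendsto_sandwich[of "\<lambda>k. r" _ _ "\<lambda>k. r + 1 / (real k + 1)"])
      show "\<forall>\<^sub>F k in sequentially. r \<le> t k"
        by (rule always_eventually) (simp add: less_imp_le[OF r_less])
      show "\<forall>\<^sub>F k in sequentially. t k \<le> r + 1 / (real k + 1)"
        by (rule always_eventually) (simp add: less_imp_le[OF t(2)])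
      have "(\<lambda>k. r + 1 / (real k + 1)) = (\<lambda>n. r + inverse (real (Suc n)))"
        by (simp add: inverse_eq_divide add.commute)
      then show "(\<lambda>k. r + 1 / (real k + 1)) \<longlonglongrightarrow> r" using LIMSEQ_inverse_real_of_nat_add by simp
    qed simp
    then have "filterlim t (at_right r) sequentially"
      unfolding filterlim_at
      by (auto intro!: always_eventually simp: r_less less_imp_neq[OF r_less, symmetric])
    moreover have "((\<lambda>s. X s \<omega>) \<longlongrightarrow> X r \<omega>) (at_right r)"
      using continuous_at_right_path[OF \<omega> \<open>0 \<le> r\<close>] by (simp add: continuous_within)
    ultimately have "(\<lambda>k. X (t k) \<omega>) \<longlonglongrightarrow> X r \<omega>"
      by (rule filterlim_compose[of "\<lambda>s. X s \<omega>" "nhds (X r \<omega>)" "at_right r" t, rotated])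
    moreover have "X (t k) \<omega> \<in> B" for k using t(1)[of k] by (simp add: S_def)
    ultimately have "X r \<omega> \<in> B" using closed_sequentially[OF B, of "\<lambda>k. X (t k) \<omega>"] by simp
    then show ?thesis by (simp add: r_def)
  qed
qed

lemma borel_measurable_stopping_time:
  assumes "is_stopping_time F \<tau>"
  shows "\<tau> \<in> borel_measurable (M x)"
proof (rule borel_measurableI_le)
  fix y :: ennreal
  show "{\<omega> \<in> space (M x). \<tau> \<omega> \<le> y} \<in> sets (M x)"
  proof (cases "y = \<infinity>")
    case False
    define r where "r = enn2real y"
    have "0 \<le> r" "y = ennreal r" using False by (simp_all add: r_def ennreal_enn2real_if)
    moreover have "{\<omega> \<in> space (F r). \<tau> \<omega> \<le> ennreal r} \<in> sets (F r)"
      using assms \<open>0 \<le> r\<close> by (auto simp: is_stopping_time_def)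
    ultimately show ?thesis using sets_F_subset space_F by auto
  qed simp
qed

lemma hitting_time_measurable[measurable]:
  "B \<in> sets borel \<Longrightarrow> hitting_time X B \<in> borel_measurable (M x)"
  by (rule borel_measurable_stopping_time[OF stopping_time_hitting_time])

lemma stopping_time_le_in_stopped_sets:
  assumes \<tau>: "is_stopping_time F \<tau>" and "0 \<le> c"
  shows "{\<omega> \<in> space (M x). \<tau> \<omega> \<le> ennreal c} \<in> stopped_sets (M x) F \<tau>"
  unfolding stopped_sets_def
proof (intro CollectI conjI allI impI)
  show "{\<omega> \<in> space (M x). \<tau> \<omega> \<le> ennreal c} \<in> sets (M x)"
    using borel_measurable_stopping_time[OF \<tau>, of x] by measurable
  fix t :: real assume "0 \<le> t"
  have "{\<omega> \<in> space (M x). \<tau> \<omega> \<le> ennreal c} \<inter> {\<omega> \<in> space (M x). \<tau> \<omega> \<le> ennreal t}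
      = {\<omega> \<in> space (F (min c t)). \<tau> \<omega> \<le> ennreal (min c t)}"
    using space_F[of "min c t" x] \<open>0 \<le> c\<close> \<open>0 \<le> t\<close>
    by (auto simp: min_def intro: order.trans[OF _ ennreal_leI])
  also have "\<dots> \<in> sets (F (min c t))"
    using \<tau> \<open>0 \<le> c\<close> \<open>0 \<le> t\<close> by (auto simp: is_stopping_time_def)
  also have "\<dots> \<subseteq> sets (F t)" using sets_F_mono[of "min c t" t] \<open>0 \<le> c\<close> \<open>0 \<le> t\<close> by auto
  finally show "{\<omega> \<in> space (M x). \<tau> \<omega> \<le> ennreal c} \<inter> {\<omega> \<in> space (M x). \<tau> \<omega> \<le> ennreal t} \<in> sets (F t)" .
qed

lemma transition_integral_measurable:
  fixes g :: "'a \<Rightarrow> real"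
  assumes "0 \<le> u" and g[measurable]: "g \<in> borel_measurable borel"
  shows "(\<lambda>y. \<integral>\<omega>. g (X u \<omega>) \<partial>M y) \<in> borel_measurable borel"
proof -
  define P where "P y = distr (M y) borel (X u)" for y
  have Xu: "X u \<in> measurable (M y) borel" for y using X_measurable[OF \<open>0 \<le> u\<close>] .
  have "P \<in> measurable borel (subprob_algebra borel)"
  proof (rule measurable_subprob_algebra)
    fix y
    show "subprob_space (P y)" unfolding P_def
      using prob_space.prob_space_distr[OF prob_space_M Xu] prob_space_imp_subprob_space by blast
    show "sets (P y) = sets borel" by (simp add: P_def)
  next
    fix A :: "'a set" assume A: "A \<in> sets borel"
    have "emeasure (P y) A = ennreal (measure (M y) {\<omega>\<in>space (M y). X u \<omega> \<in> A})" for y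
    proof -
      interpret prob_space "M y" using prob_space_M .
      have "emeasure (P y) A = emeasure (M y) (X u -` A \<inter> space (M y))"
        unfolding P_def using A Xu by (simp add: emeasure_distr)
      then show ?thesis by (simp add: emeasure_eq_measure vimage_def Int_def conj_commute)
    qed
    then show "(\<lambda>y. emeasure (P y) A) \<in> borel_measurable borel"
      using measure_X_in_measurable[OF \<open>0 \<le> u\<close> A] by simp
  qed
  from measurable_compose[OF this integral_measurable_subprob_algebra[OF g]]
  show ?thesis unfolding P_def by (simp add: integral_distr[OF Xu g])
qed

lemma integrable_occupation:
  fixes \<phi> :: "'a \<Rightarrow> real" and S :: "'w \<Rightarrow> real set"
  assumes [measurable]: "\<phi> \<in> borel_measurable borel" and bound: "\<And>y. \<bar>\<phi> y\<bar> \<le> C"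
    and [measurable]: "Measurable.pred (M x \<Otimes>\<^sub>M lborel) (\<lambda>p. snd p \<in> S (fst p))"
    and S_subset: "\<And>\<omega>. S \<omega> \<subseteq> {0..T}"
  shows "integrable (M x) (\<lambda>\<omega>. \<integral>s\<in>S \<omega>. \<phi> (X s \<omega>) \<partial>lborel)"
proof -
  interpret prob_space "M x" by (rule prob_space_M)
  define Y where "Y = (\<lambda>p. X (max 0 (snd p)) (fst p))"
  have [measurable]: "Y \<in> borel_measurable (M x \<Otimes>\<^sub>M (lborel :: real measure))"
    unfolding Y_def by (rule measurable_X_max_0)
  define g where "g p = (if snd p \<in> S (fst p) then \<phi> (Y p) else 0)" for p
  have g[measurable]: "g \<in> borel_measurable (M x \<Otimes>\<^sub>M lborel)"
    unfolding g_def by measurable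
  have occupation_eq: "(\<integral>s\<in>S \<omega>. \<phi> (X s \<omega>) \<partial>lborel) = (\<integral>s. g (\<omega>, s) \<partial>lborel)" for \<omega>
    unfolding set_lebesgue_integral_def g_def Y_def using S_subset
    by (intro Bochner_Integration.integral_cong) (auto simp: indicator_def max_absorb2 subset_eq)
  define bound_int where "bound_int = (\<integral>s. indicator {0..T} s * C \<partial>lborel)"
  have "\<bar>\<integral>s. g (\<omega>, s) \<partial>lborel\<bar> \<le> bound_int" if "\<omega> \<in> space (M x)" for \<omega>
    unfolding bound_int_def
  proof (rule integral_abs_bound_integral)
    have "0 \<le> C" using bound[of undefined] by linarith
    show g_le: "\<bar>g (\<omega>, s)\<bar> \<le> indicator {0..T} s * C" for s
    proof (cases "s \<in> S \<omega>")
      case True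
      then show ?thesis using S_subset[of \<omega>] bound by (auto simp: g_def)
    qed (use \<open>0 \<le> C\<close> in \<open>simp add: g_def\<close>)
    show "integrable lborel (\<lambda>s. indicator {0..T} s * C)"
      by (intro integrable_mult_left integrable_real_indicator) (auto simp: emeasure_lborel_Icc_eq)
    then show "integrable lborel (\<lambda>s. g (\<omega>, s))"
    proof (rule Bochner_Integration.integrable_bound)
      show "(\<lambda>s. g (\<omega>, s)) \<in> borel_measurable lborel" using measurable_Pair2[OF g that] .
      show "AE s in lborel. norm (g (\<omega>, s)) \<le> norm (indicator {0..T} s * C)"
        using g_le \<open>0 \<le> C\<close> by (intro AE_I2) simp
    qed
  qed
  moreover have "(\<lambda>\<omega>. \<integral>s. g (\<omega>, s) \<partial>lborel) \<in> borel_measurable (M x)"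
    by (rule lborel.borel_measurable_lebesgue_integral) measurable
  ultimately show ?thesis
    unfolding occupation_eq by (intro integrable_const_bound[where B=bound_int]) auto
qed

lemma abs_integral_after_hitting_le:
  fixes \<phi> :: "'a \<Rightarrow> real"
  assumes B: "closed B" and \<phi>[measurable]: "\<phi> \<in> borel_measurable borel" and bound: "\<And>y. \<bar>\<phi> y\<bar> \<le> C"
    and "0 \<le> u" "0 \<le> a" "0 \<le> b"
    and mixing: "\<And>y. y \<in> B \<Longrightarrow> \<bar>\<integral>\<omega>. \<phi> (X u \<omega>) \<partial>M y\<bar> \<le> b"
  shows "\<bar>\<integral>\<omega>. indicator {\<omega>. hitting_time X B \<omega> \<le> ennreal a} \<omega> *
      \<phi> (X (enn2real (hitting_time X B \<omega>) + u) \<omega>) \<partial>M x\<bar> \<le> b"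
proof -
  interpret prob_space "M x" by (rule prob_space_M)
  define \<tau> where "\<tau> = hitting_time X B"
  have \<tau>: "is_stopping_time F \<tau>"
    unfolding \<tau>_def using B by (intro stopping_time_hitting_time) simp
  have [measurable]: "\<tau> \<in> borel_measurable (M x)"
    by (rule borel_measurable_stopping_time[OF \<tau>])
  define A where "A = {\<omega> \<in> space (M x). \<tau> \<omega> \<le> ennreal a}"
  have [measurable]: "A \<in> sets (M x)" unfolding A_def by measurable
  have A_stopped: "A \<in> stopped_sets (M x) F \<tau>"
    unfolding A_def by (rule stopping_time_le_in_stopped_sets[OF \<tau> \<open>0 \<le> a\<close>])
  have A_finite: "A \<inter> {\<omega>. \<tau> \<omega> < \<infinity>} = A"
    unfolding A_def using ennreal_less_top by (auto intro: le_less_trans)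
  define P\<phi> where "P\<phi> y = (\<integral>\<omega>'. \<phi> (X u \<omega>') \<partial>M y)" for y
  have [measurable]: "P\<phi> \<in> borel_measurable borel"
    unfolding P\<phi>_def by (rule transition_integral_measurable[OF \<open>0 \<le> u\<close> \<phi>])
  have "(\<lambda>\<omega>. X (enn2real (\<tau> \<omega>)) \<omega>) \<in> borel_measurable (M x)"
    by (rule measurable_X_random_time) auto
  note [measurable] = this
  have "bounded (range \<phi>)" using bound by (auto simp: bounded_iff)
  have "(\<integral>\<omega>. indicator {\<omega>. \<tau> \<omega> \<le> ennreal a} \<omega> * \<phi> (X (enn2real (\<tau> \<omega>) + u) \<omega>) \<partial>M x)
      = (\<integral>\<omega>. indicator (A \<inter> {\<omega>. \<tau> \<omega> < \<infinity>}) \<omega> * \<phi> (X (enn2real (\<tau> \<omega>) + u) \<omega>) \<partial>M x)"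
    unfolding A_finite by (rule Bochner_Integration.integral_cong) (auto simp: A_def indicator_def)
  also have "\<dots> = (\<integral>\<omega>. indicator (A \<inter> {\<omega>. \<tau> \<omega> < \<infinity>}) \<omega> * P\<phi> (X (enn2real (\<tau> \<omega>)) \<omega>) \<partial>M x)"
    unfolding P\<phi>_def
    by (rule strong_markov[OF \<tau> \<open>0 \<le> u\<close> A_stopped \<phi> \<open>bounded (range \<phi>)\<close>])
  also have "\<bar>\<dots>\<bar> \<le> b"
  proof (rule abs_integral_le_const)
    show "(\<lambda>\<omega>. indicator (A \<inter> {\<omega>. \<tau> \<omega> < \<infinity>}) \<omega> * P\<phi> (X (enn2real (\<tau> \<omega>)) \<omega>)) \<in> borel_measurable (M x)"
      unfolding A_finite by measurable
    fix \<omega> assume \<omega>: "\<omega> \<in> space (M x)"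
    show "\<bar>indicator (A \<inter> {\<omega>. \<tau> \<omega> < \<infinity>}) \<omega> * P\<phi> (X (enn2real (\<tau> \<omega>)) \<omega>)\<bar> \<le> b"
    proof (cases "\<omega> \<in> A")
      case True
      then have "X (enn2real (\<tau> \<omega>)) \<omega> \<in> B"
        unfolding \<tau>_def using A_finite by (intro X_hitting_time_mem[OF \<omega> B]) (auto simp: \<tau>_def)
      then show ?thesis using True A_finite mixing by (simp add: P\<phi>_def)
    qed (use \<open>0 \<le> b\<close> in simp)
  qed
  finally show ?thesis by (simp add: \<tau>_def)
qed

lemma abs_expected_centered_le_tv_dist:
  fixes f :: "'a \<Rightarrow> real"
  assumes \<mu>: "prob_space \<mu>" "sets \<mu> = sets borel"
    and f[measurable]: "f \<in> borel_measurable borel" and f_bound: "\<And>y. \<bar>f y\<bar> \<le> c" and "0 \<le> u"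
  shows "\<bar>\<integral>\<omega>. f (X u \<omega>) - (\<integral>y. f y \<partial>\<mu>) \<partial>M x\<bar> \<le> 2 * c * tv_dist (trans_prob M X u x) \<mu>"
proof -
  interpret prob_space "M x" by (rule prob_space_M)
  have Xu[measurable]: "X u \<in> borel_measurable (M x)" by (rule X_measurable[OF \<open>0 \<le> u\<close>])
  have "integrable (M x) (\<lambda>\<omega>. f (X u \<omega>))"
    using f_bound by (intro integrable_const_bound[where B=c]) auto
  then have "(\<integral>\<omega>. f (X u \<omega>) - (\<integral>y. f y \<partial>\<mu>) \<partial>M x)
      = (\<integral>z. f z \<partial>trans_prob M X u x) - (\<integral>y. f y \<partial>\<mu>)"
    by (simp add: prob_space trans_prob_def integral_distr)
  also have "\<bar>\<dots>\<bar> \<le> 2 * c * tv_dist (trans_prob M X u x) \<mu>"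
    using prob_space_distr[OF Xu] \<mu> f f_bound
    by (intro abs_integral_diff_le_tv_dist) (auto simp: trans_prob_def)
  finally show ?thesis .
qed

end

text \<open>\<open>\<phi>\<close> plays the role of \<open>f - \<mu>(f)\<close>; \<open>mixing\<close> asks the process started in \<open>B\<close> to relax at an
  integrable rate \<open>b\<close>, which (D1) provides on every ball since \<open>K\<close> is bounded there.\<close>
locale mixing_after_hitting = markov_process M F X
  for M :: "'a::{metric_space, second_countable_topology} \<Rightarrow> 'w measure"
    and F :: "real \<Rightarrow> 'w measure" and X :: "real \<Rightarrow> 'w \<Rightarrow> 'a" +
  fixes \<phi> :: "'a \<Rightarrow> real" and B :: "'a set" and C :: real and b :: "real \<Rightarrow> real"
  assumes closed_B: "closed B"
    and measurable_\<phi>[measurable]: "\<phi> \<in> borel_measurable borel"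
    and abs_\<phi>_le: "\<And>y. \<bar>\<phi> y\<bar> \<le> C"
    and integrable_b: "set_integrable lborel {0..} b"
    and b_nonneg: "\<And>u. 0 \<le> u \<Longrightarrow> 0 \<le> b u"
    and mixing: "\<And>u y. 0 \<le> u \<Longrightarrow> y \<in> B \<Longrightarrow> \<bar>\<integral>\<omega>. \<phi> (X u \<omega>) \<partial>M y\<bar> \<le> b u"
begin

abbreviation truncated_hitting_time :: "real \<Rightarrow> 'w \<Rightarrow> real" where
  "truncated_hitting_time T \<omega> \<equiv> enn2real (min (hitting_time X B \<omega>) (ennreal T))"

text \<open>The part of the occupation integral up to \<open>T\<close> that is accumulated after the hitting time;
  the \<open>max 0\<close> only serves joint measurability.\<close>
definition post_hitting :: "real \<Rightarrow> 'w \<Rightarrow> real \<Rightarrow> real" where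
  "post_hitting T \<omega> u = indicator {0..T} u *
    (if hitting_time X B \<omega> \<le> ennreal (T - u) then \<phi> (X (max 0 (enn2real (hitting_time X B \<omega>) + u)) \<omega>) else 0)"

lemma C_nonneg: "0 \<le> C"
  using abs_\<phi>_le[of undefined] by linarith

lemma hitting_time_B_measurable[measurable]: "hitting_time X B \<in> borel_measurable (M x)"
  using closed_B by (intro hitting_time_measurable) simp

lemma measurable_post_hitting[measurable]:
  "(\<lambda>(\<omega>, u). post_hitting T \<omega> u) \<in> borel_measurable (M x \<Otimes>\<^sub>M lborel)"
proof -
  define Y where "Y = (\<lambda>p. X (max 0 (snd p)) (fst p))"
  have [measurable]: "Y \<in> borel_measurable (M x \<Otimes>\<^sub>M (lborel :: real measure))"
    unfolding Y_def by (rule measurable_X_max_0)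
  have "(\<lambda>(\<omega>, u). post_hitting T \<omega> u) = (\<lambda>p. indicator {0..T} (snd p) * (if hitting_time X B (fst p) \<le> ennreal (T - snd p)
      then \<phi> (Y (fst p, enn2real (hitting_time X B (fst p)) + snd p)) else 0))"
    by (simp add: fun_eq_iff post_hitting_def Y_def)
  then show ?thesis by simp
qed

lemma abs_post_hitting_le: "\<bar>post_hitting T \<omega> u\<bar> \<le> indicator {0..T} u * C"
  using abs_\<phi>_le C_nonneg by (auto simp: post_hitting_def indicator_def)

lemma integrable_post_hitting: "integrable (M x \<Otimes>\<^sub>M lborel) (\<lambda>(\<omega>, u). post_hitting T \<omega> u)"
proof (rule Bochner_Integration.integrable_bound)
  interpret prob_space "M x" by (rule prob_space_M)
  have "emeasure (M x \<Otimes>\<^sub>M lborel) (space (M x) \<times> {0..T}) < \<infinity>"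
    by (subst lborel.emeasure_pair_measure_Times) (auto simp: emeasure_space_1 emeasure_lborel_Icc_eq)
  then show "integrable (M x \<Otimes>\<^sub>M lborel) (\<lambda>p. C * indicator (space (M x) \<times> {0..T}) p)"
    by (intro integrable_mult_right integrable_real_indicator) auto
  show "AE p in M x \<Otimes>\<^sub>M lborel. norm (case p of (\<omega>, u) \<Rightarrow> post_hitting T \<omega> u) \<le> norm (C * indicator (space (M x) \<times> {0..T}) p)"
  proof (intro AE_I2)
    fix p :: "'w \<times> real" assume "p \<in> space (M x \<Otimes>\<^sub>M lborel)"
    then have "indicator (space (M x) \<times> {0..T}) p = (indicator {0..T} (snd p) :: real)"
      by (auto simp: space_pair_measure indicator_def)
    then show "norm (case p of (\<omega>, u) \<Rightarrow> post_hitting T \<omega> u) \<le> norm (C * indicator (space (M x) \<times> {0..T}) p)"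
      using abs_post_hitting_le[of T "fst p" "snd p"] C_nonneg by (cases p) (simp add: mult.commute)
  qed
qed measurable

lemma abs_integral_post_hitting_le:
  "\<bar>\<integral>\<omega>. post_hitting T \<omega> u \<partial>M x\<bar> \<le> indicator {0..T} u * b u"
proof (cases "0 \<le> u \<and> u \<le> T")
  case True
  have "(\<integral>\<omega>. post_hitting T \<omega> u \<partial>M x) = (\<integral>\<omega>. indicator {\<omega>. hitting_time X B \<omega> \<le> ennreal (T - u)} \<omega> *
      \<phi> (X (enn2real (hitting_time X B \<omega>) + u) \<omega>) \<partial>M x)"
    using True by (intro Bochner_Integration.integral_cong) (auto simp: post_hitting_def indicator_def)
  also have "\<bar>\<dots>\<bar> \<le> b u"
    using True closed_B abs_\<phi>_le b_nonneg mixing by (intro abs_integral_after_hitting_le) auto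
  finally show ?thesis using True by simp
qed (auto simp: post_hitting_def)

lemma set_integrable_path:
  assumes \<omega>: "\<omega> \<in> space (M x)" and [measurable]: "A \<in> sets borel"
    and "A \<subseteq> {0..}" "emeasure lborel A < \<infinity>"
  shows "set_integrable lborel A (\<lambda>s. \<phi> (X s \<omega>))"
proof -
  have [measurable]: "(\<lambda>s. X (max 0 s) \<omega>) \<in> borel_measurable borel"
    using measurable_path[OF \<omega>] .
  have "set_integrable lborel A (\<lambda>s. \<phi> (X (max 0 s) \<omega>))"
    using abs_\<phi>_le assms(4) by (intro set_integrable_bounded) auto
  moreover have "set_integrable lborel A (\<lambda>s. \<phi> (X (max 0 s) \<omega>)) = set_integrable lborel A (\<lambda>s. \<phi> (X s \<omega>))"
    using \<open>A \<subseteq> {0..}\<close> by (intro set_integrable_cong) auto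
  ultimately show ?thesis by simp
qed

lemma occupation_split_at_hitting_time:
  assumes \<omega>: "\<omega> \<in> space (M x)" and "0 \<le> T"
  shows "(\<integral>s\<in>{0..T}. \<phi> (X s \<omega>) \<partial>lborel) =
    (\<integral>s\<in>{0..<truncated_hitting_time T \<omega>}. \<phi> (X s \<omega>) \<partial>lborel) + (\<integral>u. post_hitting T \<omega> u \<partial>lborel)"
proof -
  define \<psi> where "\<psi> s = \<phi> (X (max 0 s) \<omega>)" for s
  have [measurable]: "(\<lambda>s. X (max 0 s) \<omega>) \<in> borel_measurable borel"
    using measurable_path[OF \<omega>] .
  have "\<psi> \<in> borel_measurable borel" unfolding \<psi>_def by measurable
  moreover have "\<bar>\<psi> s\<bar> \<le> C" for s unfolding \<psi>_def by (rule abs_\<phi>_le)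
  ultimately have "(\<integral>s\<in>{0..T}. \<psi> s \<partial>lborel) =
      (\<integral>s\<in>{0..<truncated_hitting_time T \<omega>}. \<psi> s \<partial>lborel) + (\<integral>u. post_hitting T \<omega> u \<partial>lborel)"
    using set_integral_Icc_split_at_ennreal[of \<psi> C T "hitting_time X B \<omega>"] \<open>0 \<le> T\<close>
    unfolding \<psi>_def by (simp add: post_hitting_def)
  moreover have "(\<integral>s\<in>{0..T}. \<psi> s \<partial>lborel) = (\<integral>s\<in>{0..T}. \<phi> (X s \<omega>) \<partial>lborel)"
    "(\<integral>s\<in>{0..<truncated_hitting_time T \<omega>}. \<psi> s \<partial>lborel)
      = (\<integral>s\<in>{0..<truncated_hitting_time T \<omega>}. \<phi> (X s \<omega>) \<partial>lborel)"
    by (auto intro!: set_lebesgue_integral_cong simp: \<psi>_def)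
  ultimately show ?thesis by simp
qed

lemma integrable_occupation_before_hitting:
  "0 \<le> T \<Longrightarrow> integrable (M x) (\<lambda>\<omega>. \<integral>s\<in>{0..<truncated_hitting_time T \<omega>}. \<phi> (X s \<omega>) \<partial>lborel)"
proof (rule integrable_occupation[where T=T])
  show "Measurable.pred (M x \<Otimes>\<^sub>M lborel) (\<lambda>p. snd p \<in> {0..<truncated_hitting_time T (fst p)})"
    by simp
  show "{0..<truncated_hitting_time T \<omega>} \<subseteq> {0..T}" if "0 \<le> T" for \<omega>
    using that enn2real_mono[OF min.cobounded2, of "ennreal T" "hitting_time X B \<omega>"] by auto
qed (use abs_\<phi>_le in auto)

lemma abs_expected_occupation_diff_le:
  assumes "0 \<le> T"
  shows "\<bar>(\<integral>\<omega>. (\<integral>s\<in>{0..T}. \<phi> (X s \<omega>) \<partial>lborel) \<partial>M x)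
      - (\<integral>\<omega>. (\<integral>s\<in>{0..<truncated_hitting_time T \<omega>}. \<phi> (X s \<omega>) \<partial>lborel) \<partial>M x)\<bar>
    \<le> (\<integral>u\<in>{0..}. b u \<partial>lborel)"
proof -
  interpret P: prob_space "M x" by (rule prob_space_M)
  interpret pair_sigma_finite "M x" lborel
    by (simp add: pair_sigma_finite_def P.sigma_finite_measure_axioms lborel.sigma_finite_measure_axioms)
  note post_int = integrable_post_hitting[of x T]
  have "(\<integral>\<omega>. (\<integral>s\<in>{0..T}. \<phi> (X s \<omega>) \<partial>lborel) \<partial>M x) = (\<integral>\<omega>.
      (\<integral>s\<in>{0..<truncated_hitting_time T \<omega>}. \<phi> (X s \<omega>) \<partial>lborel) + (\<integral>u. post_hitting T \<omega> u \<partial>lborel) \<partial>M x)"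
    using \<open>0 \<le> T\<close> by (intro Bochner_Integration.integral_cong) (auto simp: occupation_split_at_hitting_time)
  also have "\<dots> = (\<integral>\<omega>. (\<integral>s\<in>{0..<truncated_hitting_time T \<omega>}. \<phi> (X s \<omega>) \<partial>lborel) \<partial>M x)
      + (\<integral>\<omega>. (\<integral>u. post_hitting T \<omega> u \<partial>lborel) \<partial>M x)"
    using integrable_occupation_before_hitting[OF \<open>0 \<le> T\<close>] integrable_fst[OF post_int]
    by (intro Bochner_Integration.integral_add) auto
  also have "(\<integral>\<omega>. (\<integral>u. post_hitting T \<omega> u \<partial>lborel) \<partial>M x) = (\<integral>u. (\<integral>\<omega>. post_hitting T \<omega> u \<partial>M x) \<partial>lborel)"
    using Fubini_integral[OF post_int] by simp
  finally have diff: "(\<integral>\<omega>. (\<integral>s\<in>{0..T}. \<phi> (X s \<omega>) \<partial>lborel) \<partial>M x)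
      - (\<integral>\<omega>. (\<integral>s\<in>{0..<truncated_hitting_time T \<omega>}. \<phi> (X s \<omega>) \<partial>lborel) \<partial>M x)
      = (\<integral>u. (\<integral>\<omega>. post_hitting T \<omega> u \<partial>M x) \<partial>lborel)"
    by simp
  have b_Icc: "integrable lborel (\<lambda>u. indicator {0..T} u * b u)"
    using set_integrable_subset[OF integrable_b, of "{0..T}"] by (simp add: set_integrable_def)
  have "\<bar>\<integral>u. (\<integral>\<omega>. post_hitting T \<omega> u \<partial>M x) \<partial>lborel\<bar> \<le> (\<integral>u. indicator {0..T} u * b u \<partial>lborel)"
    using integrable_snd[OF post_int] b_Icc abs_integral_post_hitting_le
    by (intro integral_abs_bound_integral) auto
  also have "\<dots> \<le> (\<integral>u. indicator {0..} u * b u \<partial>lborel)"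
    using b_Icc integrable_b b_nonneg
    by (intro integral_mono) (auto simp: set_integrable_def indicator_def)
  finally show ?thesis
    unfolding diff by (simp add: set_lebesgue_integral_def)
qed

lemma
  assumes "0 \<le> T"
  shows integrable_truncated_hitting_time: "integrable (M x) (truncated_hitting_time T)"
    and integral_truncated_hitting_time:
      "ennreal (\<integral>\<omega>. truncated_hitting_time T \<omega> \<partial>M x) = (\<integral>\<^sup>+\<omega>. min (hitting_time X B \<omega>) (ennreal T) \<partial>M x)"
proof -
  interpret prob_space "M x" by (rule prob_space_M)
  have bounds: "0 \<le> truncated_hitting_time T \<omega>" "truncated_hitting_time T \<omega> \<le> T" for \<omega>
    using enn2real_mono[OF min.cobounded2, of "ennreal T" "hitting_time X B \<omega>"] \<open>0 \<le> T\<close> by auto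
  show integrable: "integrable (M x) (truncated_hitting_time T)"
    using bounds by (intro integrable_const_bound[where B=T]) auto
  have "min (hitting_time X B \<omega>) (ennreal T) = ennreal (truncated_hitting_time T \<omega>)" for \<omega>
  proof -
    have "min (hitting_time X B \<omega>) (ennreal T) < top"
      using min.cobounded2 ennreal_less_top by (rule le_less_trans)
    then show ?thesis by (simp add: ennreal_enn2real_if)
  qed
  then show "ennreal (\<integral>\<omega>. truncated_hitting_time T \<omega> \<partial>M x) = (\<integral>\<^sup>+\<omega>. min (hitting_time X B \<omega>) (ennreal T) \<partial>M x)"
    using nn_integral_eq_integral[OF integrable] bounds by simp
qed

lemma occupation_le:
  assumes "\<omega> \<in> space (M x)" "0 \<le> m"
  shows "(\<integral>s\<in>{0..<m}. \<phi> (X s \<omega>) \<partial>lborel) \<le> C * m"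
proof -
  have "(\<integral>s\<in>{0..<m}. \<phi> (X s \<omega>) \<partial>lborel) \<le> (\<integral>s\<in>{0..<m}. C \<partial>lborel)"
    using assms abs_\<phi>_le
    by (intro set_integral_mono set_integrable_path) (auto simp: set_integrable_def abs_le_iff)
  then show ?thesis using \<open>0 \<le> m\<close> by (simp add: set_integral_const mult.commute)
qed

lemma occupation_before_hitting_ge:
  assumes \<omega>: "\<omega> \<in> space (M x)" and outside: "\<And>y. y \<notin> B \<Longrightarrow> \<delta> \<le> \<phi> y"
  shows "\<delta> * truncated_hitting_time T \<omega> \<le> (\<integral>s\<in>{0..<truncated_hitting_time T \<omega>}. \<phi> (X s \<omega>) \<partial>lborel)"
proof -
  have "X s \<omega> \<notin> B" if "0 \<le> s" "s < truncated_hitting_time T \<omega>" for s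
  proof
    assume "X s \<omega> \<in> B"
    then have "min (hitting_time X B \<omega>) (ennreal T) \<le> ennreal s"
      using hitting_time_le[OF \<open>0 \<le> s\<close>] min.coboundedI1 by blast
    then have "truncated_hitting_time T \<omega> \<le> s"
      using enn2real_mono[of _ "ennreal s"] \<open>0 \<le> s\<close> by fastforce
    with that show False by simp
  qed
  then have "(\<integral>s\<in>{0..<truncated_hitting_time T \<omega>}. \<delta> \<partial>lborel)
      \<le> (\<integral>s\<in>{0..<truncated_hitting_time T \<omega>}. \<phi> (X s \<omega>) \<partial>lborel)"
    using \<omega> outside by (intro set_integral_mono set_integrable_path) (auto simp: set_integrable_def)
  then show ?thesis by (simp add: set_integral_const mult.commute)
qed

lemma expected_occupation_le:
  assumes "0 \<le> T" "0 \<le> e" and hitting_le: "(\<integral>\<^sup>+\<omega>. hitting_time X B \<omega> \<partial>M x) \<le> ennreal e"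
  shows "(\<integral>\<omega>. (\<integral>s\<in>{0..T}. \<phi> (X s \<omega>) \<partial>lborel) \<partial>M x) \<le> C * e + (\<integral>u\<in>{0..}. b u \<partial>lborel)"
proof -
  have "ennreal (\<integral>\<omega>. truncated_hitting_time T \<omega> \<partial>M x) \<le> (\<integral>\<^sup>+\<omega>. hitting_time X B \<omega> \<partial>M x)"
    unfolding integral_truncated_hitting_time[OF \<open>0 \<le> T\<close>] by (intro nn_integral_mono) simp
  also note hitting_le
  finally have "(\<integral>\<omega>. truncated_hitting_time T \<omega> \<partial>M x) \<le> e"
    using \<open>0 \<le> e\<close> by (simp add: ennreal_le_iff)
  have "(\<integral>\<omega>. (\<integral>s\<in>{0..<truncated_hitting_time T \<omega>}. \<phi> (X s \<omega>) \<partial>lborel) \<partial>M x)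
      \<le> (\<integral>\<omega>. C * truncated_hitting_time T \<omega> \<partial>M x)"
    using integrable_occupation_before_hitting[OF \<open>0 \<le> T\<close>] integrable_truncated_hitting_time[OF \<open>0 \<le> T\<close>]
    by (intro integral_mono occupation_le) auto
  also have "\<dots> \<le> C * e"
    using \<open>(\<integral>\<omega>. truncated_hitting_time T \<omega> \<partial>M x) \<le> e\<close> C_nonneg by (simp add: mult_left_mono)
  finally show ?thesis
    using abs_expected_occupation_diff_le[OF \<open>0 \<le> T\<close>, of x] by linarith
qed

lemma expected_occupation_ge:
  assumes "0 \<le> T" "0 \<le> \<delta>" and outside: "\<And>y. y \<notin> B \<Longrightarrow> \<delta> \<le> \<phi> y"
    and "0 \<le> z" "ennreal z \<le> (\<integral>\<^sup>+\<omega>. min (hitting_time X B \<omega>) (ennreal T) \<partial>M x)"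
  shows "\<delta> * z - (\<integral>u\<in>{0..}. b u \<partial>lborel) \<le> (\<integral>\<omega>. (\<integral>s\<in>{0..T}. \<phi> (X s \<omega>) \<partial>lborel) \<partial>M x)"
proof -
  have "0 \<le> (\<integral>\<omega>. truncated_hitting_time T \<omega> \<partial>M x)"
    by simp
  moreover have "ennreal z \<le> ennreal (\<integral>\<omega>. truncated_hitting_time T \<omega> \<partial>M x)"
    using assms(5) integral_truncated_hitting_time[OF \<open>0 \<le> T\<close>, of x] by simp
  ultimately have "z \<le> (\<integral>\<omega>. truncated_hitting_time T \<omega> \<partial>M x)"
    by (simp add: ennreal_le_iff)
  then have "\<delta> * z \<le> (\<integral>\<omega>. \<delta> * truncated_hitting_time T \<omega> \<partial>M x)"
    using \<open>0 \<le> \<delta>\<close> by (simp add: mult_left_mono)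
  also have "\<dots> \<le> (\<integral>\<omega>. (\<integral>s\<in>{0..<truncated_hitting_time T \<omega>}. \<phi> (X s \<omega>) \<partial>lborel) \<partial>M x)"
    using integrable_occupation_before_hitting[OF \<open>0 \<le> T\<close>] integrable_truncated_hitting_time[OF \<open>0 \<le> T\<close>]
    by (intro integral_mono occupation_before_hitting_ge outside) auto
  finally show ?thesis
    using abs_expected_occupation_diff_le[OF \<open>0 \<le> T\<close>, of x] by linarith
qed

lemma Limsup_expected_occupation_le:
  assumes "0 \<le> e" "(\<integral>\<^sup>+\<omega>. hitting_time X B \<omega> \<partial>M x) \<le> ennreal e"
  shows "Limsup at_top (\<lambda>T. ereal (\<integral>\<omega>. (\<integral>s\<in>{0..T}. \<phi> (X s \<omega>) \<partial>lborel) \<partial>M x))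
    \<le> ereal (C * e + (\<integral>u\<in>{0..}. b u \<partial>lborel))"
proof (intro Limsup_bounded)
  show "\<forall>\<^sub>F T in at_top. ereal (\<integral>\<omega>. (\<integral>s\<in>{0..T}. \<phi> (X s \<omega>) \<partial>lborel) \<partial>M x)
      \<le> ereal (C * e + (\<integral>u\<in>{0..}. b u \<partial>lborel))"
    using eventually_ge_at_top[of "0::real"]
    by eventually_elim (simp add: expected_occupation_le[OF _ assms])
qed

lemma Limsup_expected_occupation_ge:
  assumes "0 \<le> \<delta>" "\<And>y. y \<notin> B \<Longrightarrow> \<delta> \<le> \<phi> y"
    and "0 \<le> z" "ennreal z < (\<integral>\<^sup>+\<omega>. hitting_time X B \<omega> \<partial>M x)"
  shows "ereal (\<delta> * z - (\<integral>u\<in>{0..}. b u \<partial>lborel))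
    \<le> Limsup at_top (\<lambda>T. ereal (\<integral>\<omega>. (\<integral>s\<in>{0..T}. \<phi> (X s \<omega>) \<partial>lborel) \<partial>M x))"
proof (intro le_Limsup)
  show "\<forall>\<^sub>F T in at_top. ereal (\<delta> * z - (\<integral>u\<in>{0..}. b u \<partial>lborel))
      \<le> ereal (\<integral>\<omega>. (\<integral>s\<in>{0..T}. \<phi> (X s \<omega>) \<partial>lborel) \<partial>M x)"
    using eventually_less_nn_integral_min[OF hitting_time_B_measurable assms(4)] eventually_ge_at_top[of "0::real"]
    by eventually_elim (simp add: expected_occupation_ge[OF _ assms(1,2,3)])
qed simp

end

lemma (in markov_process) mixing_after_hitting_if_tv_bound:
  fixes f K h :: "_ \<Rightarrow> real"
  assumes \<mu>: "prob_space \<mu>" "sets \<mu> = sets borel"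
    and f[measurable]: "f \<in> borel_measurable borel" and f_bound: "\<And>y. \<bar>f y\<bar> \<le> c"
    and "closed B" and K_le: "\<And>y. y \<in> B \<Longrightarrow> K y \<le> k" and "0 \<le> k"
    and h_int: "set_integrable lborel {0..} h" and h_nonneg: "\<And>t. 0 \<le> t \<Longrightarrow> 0 \<le> h t"
    and tv: "\<And>y t. 0 \<le> t \<Longrightarrow> tv_dist (trans_prob M X t y) \<mu> \<le> K y * h t"
  shows "mixing_after_hitting M F X (\<lambda>y. f y - (\<integral>y. f y \<partial>\<mu>)) B (2 * c) (\<lambda>u. 2 * c * k * h u)"
proof unfold_locales
  have "\<bar>\<integral>y. f y \<partial>\<mu>\<bar> \<le> c"
    using f_bound by (intro prob_space.abs_integral_le_const[OF \<mu>(1)]) (auto simp: measurable_cong_sets[OF \<mu>(2)])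
  then show "\<bar>f y - (\<integral>y. f y \<partial>\<mu>)\<bar> \<le> 2 * c" for y
    using f_bound[of y] by linarith
  from \<open>\<bar>\<integral>y. f y \<partial>\<mu>\<bar> \<le> c\<close> have "0 \<le> c" by linarith
  then show "0 \<le> 2 * c * k * h u" if "0 \<le> u" for u
    using \<open>0 \<le> k\<close> h_nonneg[OF that] by simp
  show "set_integrable lborel {0..} (\<lambda>u. 2 * c * k * h u)"
    using h_int by (rule set_integrable_mult_right)
  fix u :: real and y assume "0 \<le> u" "y \<in> B"
  have "\<bar>\<integral>\<omega>. f (X u \<omega>) - (\<integral>y. f y \<partial>\<mu>) \<partial>M y\<bar> \<le> 2 * c * tv_dist (trans_prob M X u y) \<mu>"
    using \<mu> f f_bound \<open>0 \<le> u\<close> by (rule abs_expected_centered_le_tv_dist)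
  also have "\<dots> \<le> 2 * c * (k * h u)"
    using tv[OF \<open>0 \<le> u\<close>, of y] K_le[OF \<open>y \<in> B\<close>] h_nonneg[OF \<open>0 \<le> u\<close>] \<open>0 \<le> c\<close>
    by (intro mult_left_mono) (auto intro: order.trans mult_right_mono)
  finally show "\<bar>\<integral>\<omega>. f (X u \<omega>) - (\<integral>y. f y \<partial>\<mu>) \<partial>M y\<bar> \<le> 2 * c * k * h u"
    by (simp add: mult.assoc)
qed (use \<open>closed B\<close> in simp_all)

lemma gt_outside_cball_if_compact_sublevel:
  fixes f :: "'a::metric_space \<Rightarrow> real"
  assumes "compact {y. f y \<le> a}"
  obtains n :: nat where "\<And>y. y \<notin> {y. dist x0 y \<le> real n} \<Longrightarrow> a < f y"
proof -
  obtain e where e: "\<And>y. f y \<le> a \<Longrightarrow> dist x0 y \<le> e"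
    using compact_imp_bounded[OF assms] unfolding bounded_any_center[where a=x0] by blast
  have "a < f y" if "y \<notin> {y. dist x0 y \<le> real (nat \<lceil>e\<rceil>)}" for y
  proof (rule ccontr)
    assume "\<not> a < f y"
    then have "dist x0 y \<le> e" by (intro e) simp
    then show False using that real_nat_ceiling_ge[of e] by simp
  qed
  then show ?thesis by (rule that)
qed

theorem lemma2p22:
  fixes M :: "'a::{heine_borel, second_countable_topology} \<Rightarrow> 'w measure"
    and F :: "real \<Rightarrow> 'w measure"
    and X :: "real \<Rightarrow> 'w \<Rightarrow> 'a"
    and \<mu> :: "'a measure"
    and x0 :: 'a
    and f :: "'a \<Rightarrow> real"
    and K :: "'a \<Rightarrow> real"
    and h :: "real \<Rightarrow> real"
    and \<delta> :: real
  assumes markov: "standard_markov M F X"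
    and feller: "weak_feller x0 M X"
    and ergodic: "ergodic_with M X \<mu>"
    and f_cont: "continuous_on UNIV f"
    and f_bdd: "bounded (range f)"
    and K_pos: "\<forall>x. 0 < K x"
    and K_bdd: "\<forall>S. compact S \<longrightarrow> bounded (K ` S)"
    and h_nonneg: "\<forall>t\<ge>0. 0 \<le> h t"
    and h_int: "set_integrable lborel {0..} h"
    and D1: "\<forall>x. \<forall>t\<ge>0. tv_dist (trans_prob M X t x) \<mu> < K x * h t"
    and D2: "\<forall>x. \<forall>T\<ge>0. (\<integral>\<^sup>+\<omega>. ennreal (K (X T \<omega>)) \<partial>M x) < \<infinity>"
    and mu_neg: "(\<integral>y. f y \<partial>\<mu>) < 0"
    and \<delta>_pos: "0 < \<delta>"
    and L_compact: "compact {x. f x \<le> (\<integral>y. f y \<partial>\<mu>) + \<delta>}"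
  defines "q \<equiv> (\<lambda>x. Limsup at_top (\<lambda>T::real.
              ereal (\<integral>\<omega>. (\<integral>s\<in>{0..T}. (f (X s \<omega>) - (\<integral>y. f y \<partial>\<mu>)) \<partial>lborel) \<partial>M x)))"
  shows "(q \<longlongrightarrow> \<infinity>) (at_infty_from x0) \<longleftrightarrow>
         (\<forall>n::nat. ((\<lambda>x. \<integral>\<^sup>+\<omega>. hitting_time X {y. dist x0 y \<le> real n} \<omega> \<partial>M x) \<longlongrightarrow> \<infinity>)
                     (at_infty_from x0))"
proof -
  interpret markov_process M F X by (rule markov_process.intro[OF markov])
  define B where "B n = {y. dist x0 y \<le> real n}" for n :: nat
  define k where "k n = (SUP y\<in>B n. K y)" for n
  obtain c where c: "\<And>y. \<bar>f y\<bar> \<le> c"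
    using f_bdd unfolding bounded_any_center[where a=0] by (auto simp: dist_real_def)
  have K_le: "K y \<le> k n" if "y \<in> B n" for n y
    unfolding k_def using that K_bdd compact_cball[of x0 "real n"]
    by (intro cSUP_upper bounded_imp_bdd_above) (auto simp: B_def cball_def)
  have "0 \<le> k n" for n
    using K_le[of x0 n] K_pos[rule_format, of x0] by (simp add: B_def)
  moreover have "prob_space \<mu>" "sets \<mu> = sets borel"
    using ergodic by (simp_all add: ergodic_with_def)
  moreover have "closed (B n)" for n
    unfolding B_def by (simp add: closed_cball cball_def[symmetric])
  ultimately have mixing:
    "mixing_after_hitting M F X (\<lambda>y. f y - (\<integral>y. f y \<partial>\<mu>)) (B n) (2 * c) (\<lambda>u. 2 * c * k n * h u)" for n
    using D1 h_nonneg K_le c h_int borel_measurable_continuous_onI[OF f_cont]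
    by (intro mixing_after_hitting_if_tv_bound[where K=K]) (auto intro: less_imp_le)
  show ?thesis
  proof (intro iffI allI)
    fix n :: nat
    assume "(q \<longlongrightarrow> \<infinity>) (at_infty_from x0)"
    then show "((\<lambda>x. \<integral>\<^sup>+\<omega>. hitting_time X {y. dist x0 y \<le> real n} \<omega> \<partial>M x) \<longlongrightarrow> \<infinity>) (at_infty_from x0)"
      unfolding q_def
      by (rule tendsto_top_if_affine_upper_bound[OF _
            mixing_after_hitting.Limsup_expected_occupation_le[OF mixing[of n], unfolded B_def]])
  next
    assume hitting: "\<forall>n::nat. ((\<lambda>x. \<integral>\<^sup>+\<omega>. hitting_time X {y. dist x0 y \<le> real n} \<omega> \<partial>M x) \<longlongrightarrow> \<infinity>)
      (at_infty_from x0)"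
    obtain n where "\<And>y. y \<notin> B n \<Longrightarrow> (\<integral>y. f y \<partial>\<mu>) + \<delta> < f y"
      using gt_outside_cball_if_compact_sublevel[OF L_compact] unfolding B_def by blast
    then have "\<And>y. y \<notin> B n \<Longrightarrow> \<delta> \<le> f y - (\<integral>y. f y \<partial>\<mu>)" by fastforce
    from mixing_after_hitting.Limsup_expected_occupation_ge[OF mixing[of n] less_imp_le[OF \<delta>_pos] this]
    show "(q \<longlongrightarrow> \<infinity>) (at_infty_from x0)"
      unfolding q_def B_def by (rule tendsto_PInfty_if_affine_lower_bound[OF hitting[rule_format] \<delta>_pos])
  qed
qed

end
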